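(* Let $G$ be a finite abelian group of order $mn$, let $N \le G$ be a subgroup of order $n$, and let $D \subseteq G$ be a semiregular $(m,n,k,\lambda_1,\lambda_2)$-divisible difference set in $G$ relative to $N$. Let $\{\eta_j\}_{j=1}^m$ be an enumeration of $N^\perp$, let $\{\chi_i\}_{i=1}^n$ be a set of coset representatives of $\widehat{G}/N^\perp$, and for $1\le i\le n$, $1\le j\le m$ let $e^i_j := \frac{1}{\sqrt{k}}((\chi_i\eta_j)(g))_{g\in D}\in\mathbb{C}^k$ and $\mathcal{W}_i=\operatorname{span}\{e^i_j\}_{j=1}^m$. Let $\{h_\ell\}_{\ell=1}^m$ be a set of coset representatives of $G/N$ and define the $m\times m$ matrix \[ U=\frac{1}{\sqrt{m}}\big(\eta_j(h_\ell)\big)_{\ell,j=1}^m \] (row index $\ell$, column index $j$). For each $i$ define $\tilde L_i=(\tilde e^i_1|\cdots|\tilde e^i_m):=(e^i_1|\cdots|e^i_m)\,U^*$. Then for all $i\in\{1,\dots,n\}$, $\mathcal{W}_i=\operatorname{span}\{\tilde e^i_j\}_{j=1}^m$, the vectors $\{\tilde e^i_j\}_{j=1,i=1}^{m,n}$ are almost flat, and each vector $\tilde e^i_j$ has exactly $k/m$ nonzero coordinates.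
   Context: $\widehat{G}$ is the group of characters (homomorphisms $G\to\{z\in\mathbb{C}:|z|=1\}$) of $G$, and $N^\perp=\{\chi\in\widehat{G}:\chi(h)=1\ \forall h\in N\}$. A subset $D\subseteq G$ with $|D|=k$ is an $(m,n,k,\lambda_1,\lambda_2)$-divisible difference set relative to $N$ (with $|G|=mn$, $|N|=n$) if the multiset $\{d-d': d,d'\in D,d\ne d'\}$ contains each element of $G\setminus N$ exactly $\lambda_2$ times and each element of $N\setminus\{0\}$ exactly $\lambda_1$ times; it is semiregular if $k>\lambda_1$ and $k^2=\lambda_2mn$. A collection of vectors is almost flat if all nonzero coordinates of all the vectors have the same modulus. *)

theory Defs
  imports Complex_Main
begin

definition add_subgroup :: "'a::ab_group_add set \<Rightarrow> bool" where
  "add_subgroup N \<longleftrightarrow> 0 \<in> N \<and> (\<forall>x\<in>N. \<forall>y\<in>N. x + y \<in> N) \<and> (\<forall>x\<in>N. - x \<in> N)"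

definition is_character :: "('a::ab_group_add \<Rightarrow> complex) \<Rightarrow> bool" where
  "is_character \<chi> \<longleftrightarrow> (\<forall>x y. \<chi> (x + y) = \<chi> x * \<chi> y) \<and> (\<forall>x. cmod (\<chi> x) = 1)"

definition char_perp :: "'a::ab_group_add set \<Rightarrow> ('a \<Rightarrow> complex) set" where
  "char_perp N = {\<chi>. is_character \<chi> \<and> (\<forall>h\<in>N. \<chi> h = 1)}"

definition diff_count :: "'a::ab_group_add set \<Rightarrow> 'a \<Rightarrow> nat" where
  "diff_count D g = card {(d, d'). d \<in> D \<and> d' \<in> D \<and> d \<noteq> d' \<and> d - d' = g}"

definition divisible_difference_set ::
  "nat \<Rightarrow> nat \<Rightarrow> nat \<Rightarrow> nat \<Rightarrow> nat \<Rightarrow> 'a::{ab_group_add,finite} set \<Rightarrow> 'a set \<Rightarrow> bool" where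
  "divisible_difference_set m n k l1 l2 N D \<longleftrightarrow>
     card (UNIV :: 'a set) = m * n \<and> add_subgroup N \<and> card N = n \<and> card D = k \<and>
     (\<forall>g. g \<notin> N \<longrightarrow> diff_count D g = l2) \<and>
     (\<forall>g\<in>N. g \<noteq> 0 \<longrightarrow> diff_count D g = l1)"

definition semiregular_dds ::
  "nat \<Rightarrow> nat \<Rightarrow> nat \<Rightarrow> nat \<Rightarrow> nat \<Rightarrow> 'a::{ab_group_add,finite} set \<Rightarrow> 'a set \<Rightarrow> bool" where
  "semiregular_dds m n k l1 l2 N D \<longleftrightarrow>
     divisible_difference_set m n k l1 l2 N D \<and> k > l1 \<and> k ^ 2 = l2 * m * n"

definition cspan_fam :: "nat \<Rightarrow> (nat \<Rightarrow> 'a \<Rightarrow> complex) \<Rightarrow> ('a \<Rightarrow> complex) set" where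
  "cspan_fam m v = {x. \<exists>c :: nat \<Rightarrow> complex. x = (\<lambda>g. \<Sum>j<m. c j * v j g)}"

definition almost_flat :: "'a set \<Rightarrow> ('a \<Rightarrow> complex) set \<Rightarrow> bool" where
  "almost_flat I V \<longleftrightarrow> (\<exists>r. \<forall>v\<in>V. \<forall>g\<in>I. v g \<noteq> 0 \<longrightarrow> cmod (v g) = r)"

end

theory Submission imports Defs begin

text \<open>Summing the characters of \<open>N\<^sup>\<perp>\<close> gives m times the indicator of N, so \<open>et i j\<close> is \<open>\<chi> i\<close>
  scaled by \<open>sqrt (m/k)\<close> and restricted to the block of D in the coset \<open>h j + N\<close>. Hence the
  vectors are almost flat and the change of basis is invertible. The block sizes \<open>x\<^sub>l\<close>
  satisfy \<open>\<Sum> x\<^sub>l = k\<close>, while counting the pairs of D whose difference lies in N (the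
  others number \<open>(mn - n) \<lambda>\<^sub>2\<close>) and using \<open>k\<^sup>2 = \<lambda>\<^sub>2 mn\<close> gives \<open>m \<Sum> x\<^sub>l\<^sup>2 = k\<^sup>2\<close>:
  equality in Cauchy-Schwarz, so every block has exactly \<open>k/m\<close> elements.\<close>

lemma character_mult_cnj:
  assumes "is_character \<chi>" shows "\<chi> x * cnj (\<chi> x) = 1"
  using assms unfolding is_character_def by (metis complex_norm_square of_real_1 power_one)

lemma character_nonzero:
  assumes "is_character \<chi>" shows "\<chi> x \<noteq> 0"
  using character_mult_cnj[OF assms, of x] by auto

lemma character_zero:
  assumes "is_character \<chi>" shows "\<chi> 0 = 1"
proof -
  have "\<chi> 0 * 1 = \<chi> 0 * \<chi> 0" using assms unfolding is_character_def by (metis add_0 mult_1_right)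
  then show ?thesis using character_nonzero[OF assms] by (metis mult_left_cancel)
qed

lemma character_uminus:
  assumes "is_character \<chi>" shows "\<chi> (- x) = cnj (\<chi> x)"
proof -
  have "\<chi> x * \<chi> (- x) = 1"
    using assms character_zero[OF assms] unfolding is_character_def by (metis add.right_inverse)
  then show ?thesis using character_mult_cnj[OF assms, of x] character_nonzero[OF assms, of x]
    by (metis mult_left_cancel)
qed

lemma character_diff:
  assumes "is_character \<chi>" shows "\<chi> (x - y) = \<chi> x * cnj (\<chi> y)"
  using assms character_uminus[OF assms, of y] unfolding is_character_def
  by (metis diff_conv_add_uminus)

lemma sum_character_eq_0:
  fixes \<chi> :: "'a::{ab_group_add,finite} \<Rightarrow> complex"
  assumes "is_character \<chi>" "\<chi> y \<noteq> 1" shows "(\<Sum>x\<in>UNIV. \<chi> x) = 0"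
proof -
  have "(\<Sum>x\<in>UNIV. \<chi> (x + y)) = (\<Sum>x\<in>UNIV. \<chi> x)"
    by (rule sum.reindex_bij_witness[of _ "\<lambda>x. x - y" "\<lambda>x. x + y"]) auto
  moreover have "(\<Sum>x\<in>UNIV. \<chi> (x + y)) = (\<Sum>x\<in>UNIV. \<chi> x) * \<chi> y"
    using assms(1) unfolding is_character_def by (simp add: sum_distrib_right)
  ultimately have "(\<Sum>x\<in>UNIV. \<chi> x) * (\<chi> y - 1) = 0" by (simp add: algebra_simps)
  with assms(2) show ?thesis by simp
qed

lemma character_orthogonality:
  fixes \<chi> \<psi> :: "'a::{ab_group_add,finite} \<Rightarrow> complex"
  assumes \<chi>: "is_character \<chi>" and \<psi>: "is_character \<psi>"
  shows "(\<Sum>x\<in>UNIV. \<chi> x * cnj (\<psi> x)) = (if \<chi> = \<psi> then of_nat (card (UNIV :: 'a set)) else 0)"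
proof (cases "\<chi> = \<psi>")
  case True
  then show ?thesis using character_mult_cnj[OF \<chi>] by simp
next
  case False
  then obtain y where y: "\<chi> y \<noteq> \<psi> y" by auto
  have quot: "is_character (\<lambda>x. \<chi> x * cnj (\<psi> x))"
    using \<chi> \<psi> unfolding is_character_def by (simp add: norm_mult)
  have "\<chi> y * cnj (\<psi> y) \<noteq> 1"
  proof
    assume "\<chi> y * cnj (\<psi> y) = 1"
    then have "\<chi> y * (cnj (\<psi> y) * \<psi> y) = \<psi> y" by (metis mult.assoc mult_1)
    then show False using y character_mult_cnj[OF \<psi>, of y] by (simp add: mult.commute)
  qed
  then show ?thesis using sum_character_eq_0[OF quot] False by simp
qed

lemma sum_norm_square_sum_characters:
  fixes C :: "('a::{ab_group_add,finite} \<Rightarrow> complex) set"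
  assumes "finite C" "\<forall>\<chi>\<in>C. is_character \<chi>"
  shows "(\<Sum>x\<in>UNIV. (cmod (\<Sum>\<chi>\<in>C. \<chi> x))\<^sup>2) = real (card C * card (UNIV :: 'a set))"
proof -
  have "complex_of_real ((cmod s)\<^sup>2) = s * cnj s" for s :: complex
    by (rule complex_norm_square)
  then have "complex_of_real (\<Sum>x\<in>UNIV. (cmod (\<Sum>\<chi>\<in>C. \<chi> x))\<^sup>2)
      = (\<Sum>x\<in>UNIV. \<Sum>\<chi>\<in>C. \<Sum>\<psi>\<in>C. \<chi> x * cnj (\<psi> x))"
    by (simp add: cnj_sum sum_product)
  also have "\<dots> = (\<Sum>\<chi>\<in>C. \<Sum>\<psi>\<in>C. \<Sum>x\<in>UNIV. \<chi> x * cnj (\<psi> x))"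
    by (simp add: sum.swap[of _ UNIV] sum.swap[of _ UNIV C])
  also have "\<dots> = (\<Sum>\<chi>\<in>C. \<Sum>\<psi>\<in>C. if \<chi> = \<psi> then of_nat (card (UNIV :: 'a set)) else 0)"
    using assms(2) by (simp add: character_orthogonality)
  also have "\<dots> = of_nat (card C * card (UNIV :: 'a set))" using assms(1) by simp
  finally show ?thesis by (metis of_real_eq_iff of_real_of_nat_eq)
qed

text \<open>By the Parseval identity above, the cardinality hypothesis says that the whole
  mass of \<open>\<Sum>\<chi>\<in>C. \<chi> x\<close> already lies on N.\<close>

lemma sum_characters_perp:
  fixes N :: "'a::{ab_group_add,finite} set"
  assumes "finite C" "C \<subseteq> char_perp N" "card (UNIV :: 'a set) = card C * card N"
  shows "(\<Sum>\<chi>\<in>C. \<chi> x) = (if x \<in> N then of_nat (card C) else 0)"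
proof -
  define R where "R x = (cmod (\<Sum>\<chi>\<in>C. \<chi> x))\<^sup>2" for x
  have on_N: "(\<Sum>\<chi>\<in>C. \<chi> y) = of_nat (card C)" if "y \<in> N" for y
  proof -
    have "(\<Sum>\<chi>\<in>C. \<chi> y) = (\<Sum>\<chi>\<in>C. 1)"
      using assms(2) that unfolding char_perp_def by (intro sum.cong) auto
    then show ?thesis by simp
  qed
  have "(\<Sum>y\<in>N. R y) = real (card C * card (UNIV :: 'a set))"
    using on_N assms(3) by (simp add: R_def power2_eq_square)
  moreover have "(\<Sum>y\<in>UNIV. R y) = real (card C * card (UNIV :: 'a set))"
    unfolding R_def using assms(1,2) by (intro sum_norm_square_sum_characters) (auto simp: char_perp_def)
  moreover have "(\<Sum>y\<in>UNIV. R y) = (\<Sum>y\<in>N. R y) + (\<Sum>y\<in>UNIV - N. R y)"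
    by (metis add.commute finite sum.subset_diff subset_UNIV)
  ultimately have "(\<Sum>y\<in>UNIV - N. R y) = 0" by simp
  then have "\<forall>y\<in>UNIV - N. R y = 0" by (subst sum_nonneg_eq_0_iff[symmetric]) (auto simp: R_def)
  then show ?thesis using on_N by (auto simp: R_def)
qed

lemma sum_enumerated_characters_perp:
  fixes N :: "'a::{ab_group_add,finite} set"
  assumes "bij_betw \<eta> {..<m} (char_perp N)" "card (UNIV :: 'a set) = m * card N"
  shows "(\<Sum>a<m. \<eta> a x) = (if x \<in> N then of_nat m else 0)"
proof -
  have "(\<Sum>a<m. \<eta> a x) = (\<Sum>\<chi>\<in>char_perp N. \<chi> x)"
    using sum.reindex_bij_betw[OF assms(1), of "\<lambda>\<chi>. \<chi> x"] by simp
  moreover have "card (char_perp N) = m" using bij_betw_same_card[OF assms(1)] by simp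
  moreover have "finite (char_perp N)" using bij_betw_finite[OF assms(1)] by simp
  ultimately show ?thesis
    using sum_characters_perp[of "char_perp N" N x] assms(2) by simp
qed

lemma bij_betw_char_perp_character:
  assumes "bij_betw \<eta> {..<m} (char_perp N)" "a < m"
  shows "is_character (\<eta> a)" and "x \<in> N \<Longrightarrow> \<eta> a x = 1"
  using bij_betwE[OF assms(1)] assms(2) unfolding char_perp_def by auto

lemma transformed_vector_eq:
  fixes N D :: "'a::{ab_group_add,finite} set"
  assumes eta: "bij_betw \<eta> {..<m} (char_perp N)"
    and card: "card (UNIV :: 'a set) = m * card N"
    and e_def: "\<forall>i j. e i j = (\<lambda>g. if g \<in> D then \<chi> i g * \<eta> j g / complex_of_real (sqrt (real k)) else 0)"
    and et_def: "\<forall>i j. et i j = (\<lambda>g. \<Sum>a<m. e i a g * cnj (\<eta> a (h j)) / complex_of_real (sqrt (real m)))"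
  shows "et i j g = (if g \<in> D \<and> g - h j \<in> N
                     then \<chi> i g * complex_of_real (sqrt (real m / real k)) else 0)"
proof (cases "g \<in> D")
  case True
  have scale: "real m / (sqrt (real k) * sqrt (real m)) = sqrt (real m / real k)"
  proof (cases "m = 0")
    case False
    have "real m = sqrt (real m) * sqrt (real m)" by simp
    then show ?thesis using False by (simp add: real_sqrt_divide divide_simps)
  qed simp
  define c where "c = \<chi> i g / complex_of_real (sqrt (real k) * sqrt (real m))"
  have "et i j g = c * (\<Sum>a<m. \<eta> a g * cnj (\<eta> a (h j)))"
    using e_def et_def True unfolding c_def by (simp add: sum_distrib_left sum_divide_distrib field_simps)
  also have "\<dots> = c * (\<Sum>a<m. \<eta> a (g - h j))"
    using bij_betw_char_perp_character(1)[OF eta] by (simp add: character_diff)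
  also have "\<dots> = (if g - h j \<in> N then c * of_nat m else 0)"
    using sum_enumerated_characters_perp[OF eta card] by simp
  also have "c * of_nat m = \<chi> i g * complex_of_real (sqrt (real m / real k))"
    unfolding c_def scale[symmetric] by simp
  finally show ?thesis using True by simp
next
  case False
  then show ?thesis using e_def et_def by simp
qed

lemma vector_eq_inverse_transform:
  fixes N D :: "'a::{ab_group_add,finite} set"
  assumes eta: "bij_betw \<eta> {..<m} (char_perp N)"
    and card: "card (UNIV :: 'a set) = m * card N"
    and h_reps: "\<forall>g. \<exists>!l. l < m \<and> g - h l \<in> N"
    and e_def: "\<forall>i j. e i j = (\<lambda>g. if g \<in> D then \<chi> i g * \<eta> j g / complex_of_real (sqrt (real k)) else 0)"
    and et_def: "\<forall>i j. et i j = (\<lambda>g. \<Sum>a<m. e i a g * cnj (\<eta> a (h j)) / complex_of_real (sqrt (real m)))"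
    and a: "a < m"
  shows "e i a g = (\<Sum>j<m. \<eta> a (h j) / complex_of_real (sqrt (real m)) * et i j g)"
proof (cases "g \<in> D")
  case True
  obtain j0 where j0: "j0 < m" "g - h j0 \<in> N" using h_reps by blast
  have uniq: "l = j0" if "l < m" "g - h l \<in> N" for l using h_reps j0 that by blast
  have "\<eta> a (h j0 + (g - h j0)) = \<eta> a (h j0) * \<eta> a (g - h j0)"
    using bij_betw_char_perp_character(1)[OF eta a] unfolding is_character_def by blast
  then have \<eta>_g: "\<eta> a g = \<eta> a (h j0)"
    using bij_betw_char_perp_character(2)[OF eta a j0(2)] by simp
  have "sqrt (real m / real k) / sqrt (real m) = 1 / sqrt (real k)"
    using a by (simp add: real_sqrt_divide)
  then have scale: "complex_of_real (sqrt (real m / real k)) / complex_of_real (sqrt (real m))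
                    = 1 / complex_of_real (sqrt (real k))"
    by (metis of_real_1 of_real_divide)
  have "e i a g = \<chi> i g * \<eta> a g * (1 / complex_of_real (sqrt (real k)))"
    using True e_def by simp
  also have "\<dots> = \<chi> i g * \<eta> a g * (complex_of_real (sqrt (real m / real k)) / complex_of_real (sqrt (real m)))"
    by (simp only: scale)
  also have "\<dots> = (\<Sum>j<m. if j = j0 then \<eta> a (h j0) / complex_of_real (sqrt (real m))
                               * (\<chi> i g * complex_of_real (sqrt (real m / real k))) else 0)"
    using j0 by (simp add: \<eta>_g)
  also have "\<dots> = (\<Sum>j<m. \<eta> a (h j) / complex_of_real (sqrt (real m)) * et i j g)"
    using True j0 by (intro sum.cong) (auto simp: transformed_vector_eq[OF eta card e_def et_def] dest: uniq)
  finally show ?thesis .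
next
  case False
  then show ?thesis using e_def by (simp add: transformed_vector_eq[OF eta card e_def et_def])
qed

lemma cspan_fam_subset_lincomb:
  assumes "\<forall>j<m. \<forall>g. v j g = (\<Sum>a<m. M j a * w a g)"
  shows "cspan_fam m v \<subseteq> cspan_fam m w"
proof
  fix x assume "x \<in> cspan_fam m v"
  then obtain c where c: "x = (\<lambda>g. \<Sum>j<m. c j * v j g)" unfolding cspan_fam_def by auto
  have "x g = (\<Sum>a<m. (\<Sum>j<m. c j * M j a) * w a g)" for g
  proof -
    have "x g = (\<Sum>j<m. \<Sum>a<m. c j * M j a * w a g)"
      using c assms by (simp add: sum_distrib_left mult.assoc)
    also have "\<dots> = (\<Sum>a<m. (\<Sum>j<m. c j * M j a) * w a g)"
      by (subst sum.swap) (simp add: sum_distrib_right)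
    finally show ?thesis .
  qed
  then have "x = (\<lambda>g. \<Sum>a<m. (\<Sum>j<m. c j * M j a) * w a g)" by (rule ext)
  then show "x \<in> cspan_fam m w" unfolding cspan_fam_def by (intro CollectI exI)
qed

lemma add_subgroup_diff:
  assumes "add_subgroup N" "x \<in> N" "y \<in> N" shows "x - y \<in> N"
  using assms unfolding add_subgroup_def by (metis diff_conv_add_uminus)

lemma sum_card_transversal_blocks:
  fixes D N :: "'a::ab_group_add set" and h :: "nat \<Rightarrow> 'a"
  assumes "finite D" "\<forall>g. \<exists>!l. l < m \<and> g - h l \<in> N"
  shows "(\<Sum>l<m. card {g\<in>D. g - h l \<in> N}) = card D"
proof -
  have disj: "{g\<in>D. g - h l \<in> N} \<inter> {g\<in>D. g - h l' \<in> N} = {}" if "l < m" "l' < m" "l \<noteq> l'" for l l'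
    using assms(2) that by blast
  have "D = (\<Union>l<m. {g\<in>D. g - h l \<in> N})" using assms(2) by blast
  moreover have "card (\<Union>l<m. {g\<in>D. g - h l \<in> N}) = (\<Sum>l<m. card {g\<in>D. g - h l \<in> N})"
    using assms(1) by (intro card_UN_disjoint ballI impI) (simp_all add: disj)
  ultimately show ?thesis by simp
qed

lemma sum_card_transversal_blocks_squared:
  fixes D N :: "'a::ab_group_add set" and h :: "nat \<Rightarrow> 'a"
  assumes "finite D" "add_subgroup N" "\<forall>g. \<exists>!l. l < m \<and> g - h l \<in> N"
  shows "(\<Sum>l<m. card {g\<in>D. g - h l \<in> N} ^ 2) = card {p\<in>D \<times> D. fst p - snd p \<in> N}"
proof -
  let ?B = "\<lambda>l. {g\<in>D. g - h l \<in> N}"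
  have "d - d' \<in> N \<longleftrightarrow> d' - h l \<in> N" if "d - h l \<in> N" for d d' l
    using add_subgroup_diff[OF assms(2) that] add_subgroup_diff[OF assms(2) that, of "d - d'"]
    by (metis diff_diff_eq2 diff_add_cancel add_diff_cancel_left')
  then have "{p\<in>D \<times> D. fst p - snd p \<in> N} = (\<Union>l<m. ?B l \<times> ?B l)"
    using assms(3) by fastforce
  moreover have "(?B l \<times> ?B l) \<inter> (?B l' \<times> ?B l') = {}" if "l < m" "l' < m" "l \<noteq> l'" for l l'
    using assms(3) that by blast
  then have "card (\<Union>l<m. ?B l \<times> ?B l) = (\<Sum>l<m. card (?B l \<times> ?B l))"
    using assms(1) by (intro card_UN_disjoint ballI impI) simp_all
  ultimately show ?thesis by (simp add: card_cartesian_product power2_eq_square)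
qed

lemma card_pairs_diff_notin:
  fixes D N :: "'a::{ab_group_add,finite} set"
  assumes "0 \<in> N" "\<forall>g. g \<notin> N \<longrightarrow> diff_count D g = l2"
  shows "card {p\<in>D \<times> D. fst p - snd p \<notin> N} = card (UNIV - N) * l2"
proof -
  have "{p\<in>D \<times> D. fst p - snd p \<notin> N}
      = (\<Union>g\<in>UNIV - N. {(d, d'). d \<in> D \<and> d' \<in> D \<and> d \<noteq> d' \<and> d - d' = g})"
    using assms(1) by auto
  then have "card {p\<in>D \<times> D. fst p - snd p \<notin> N} = (\<Sum>g\<in>UNIV - N. diff_count D g)"
    unfolding diff_count_def by (simp only:) (rule card_UN_disjoint; auto)
  then show ?thesis using assms(2) by simp
qed

lemma constant_if_sum_squares_eq:
  fixes x :: "nat \<Rightarrow> real"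
  assumes "real m * (\<Sum>l<m. (x l)\<^sup>2) = (\<Sum>l<m. x l)\<^sup>2" "l < m"
  shows "real m * x l = (\<Sum>l<m. x l)"
proof -
  define s where "s = (\<Sum>l<m. x l)"
  have "(\<Sum>l<m. (real m * x l - s)\<^sup>2)
      = (real m)\<^sup>2 * (\<Sum>l<m. (x l)\<^sup>2) - 2 * real m * s * (\<Sum>l<m. x l) + real m * s\<^sup>2"
    by (simp add: power2_eq_square algebra_simps sum.distrib sum_subtractf sum_distrib_left)
  also have "\<dots> = 0" using assms(1) unfolding s_def by (simp add: power2_eq_square algebra_simps)
  finally have "\<forall>l\<in>{..<m}. (real m * x l - s)\<^sup>2 = 0"
    by (subst sum_nonneg_eq_0_iff[symmetric]) auto
  then show ?thesis using assms(2) unfolding s_def by simp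
qed

lemma semiregular_dds_card_coset:
  fixes D N :: "'a::{ab_group_add,finite} set" and h :: "nat \<Rightarrow> 'a"
  assumes dds: "semiregular_dds m n k l1 l2 N D"
    and h_reps: "\<forall>g. \<exists>!l. l < m \<and> g - h l \<in> N"
    and l: "l < m"
  shows "real (card {g\<in>D. g - h l \<in> N}) = real k / real m"
proof -
  from dds have card: "card (UNIV :: 'a set) = m * n" and sub: "add_subgroup N"
    and cN: "card N = n" and cD: "card D = k" and l2: "\<forall>g. g \<notin> N \<longrightarrow> diff_count D g = l2"
    and k2: "k\<^sup>2 = l2 * m * n"
    unfolding semiregular_dds_def divisible_difference_set_def by auto
  define x where "x l = real (card {g\<in>D. g - h l \<in> N})" for l
  have sum_x: "(\<Sum>l<m. x l) = real k"
    unfolding x_def using sum_card_transversal_blocks[OF _ h_reps, of D] cD by (simp flip: of_nat_sum)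
  have "D \<times> D = {p\<in>D \<times> D. fst p - snd p \<in> N} \<union> {p\<in>D \<times> D. fst p - snd p \<notin> N}" by auto
  then have "card (D \<times> D) = card {p\<in>D \<times> D. fst p - snd p \<in> N} + card {p\<in>D \<times> D. fst p - snd p \<notin> N}"
    by (metis (no_types, lifting) card_Un_disjoint disjoint_iff finite mem_Collect_eq)
  then have "k * k = (\<Sum>l<m. card {g\<in>D. g - h l \<in> N} ^ 2) + (m * n - n) * l2"
    using sum_card_transversal_blocks_squared[OF _ sub h_reps, of D] card_pairs_diff_notin[OF _ l2] sub
    by (simp add: cD card cN card_cartesian_product card_Diff_subset add_subgroup_def)
  then have "real (k * k) = real ((\<Sum>l<m. card {g\<in>D. g - h l \<in> N} ^ 2) + (m * n - n) * l2)"
    by (rule arg_cong)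
  moreover have "n \<le> m * n" using l by simp
  ultimately have "real k * real k = (\<Sum>l<m. (x l)\<^sup>2) + (real m * real n - real n) * real l2"
    unfolding x_def by (simp add: of_nat_diff)
  moreover have "real k * real k = real l2 * real m * real n"
    using k2 by (metis of_nat_mult power2_eq_square)
  ultimately have "real m * (\<Sum>l<m. (x l)\<^sup>2) = (\<Sum>l<m. x l)\<^sup>2"
    unfolding sum_x by (simp add: power2_eq_square algebra_simps)
  then have "real m * x l = real k" using constant_if_sum_squares_eq[OF _ l] sum_x by simp
  then show ?thesis using l unfolding x_def by (simp add: field_simps)
qed

theorem mainTheorem2:
  fixes N D :: "'a::{ab_group_add,finite} set"
    and m n k l1 l2 :: nat
    and \<eta> \<chi> :: "nat \<Rightarrow> 'a \<Rightarrow> complex"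
    and h :: "nat \<Rightarrow> 'a"
    and e et :: "nat \<Rightarrow> nat \<Rightarrow> 'a \<Rightarrow> complex"
  assumes dds: "semiregular_dds m n k l1 l2 N D"
    and eta: "bij_betw \<eta> {..<m} (char_perp N)"
    and chi_char: "\<forall>i<n. is_character (\<chi> i)"
    and chi_reps: "\<forall>\<psi>. is_character \<psi> \<longrightarrow>
                     (\<exists>!i. i < n \<and> (\<lambda>g. \<psi> g * cnj (\<chi> i g)) \<in> char_perp N)"
    and h_reps: "\<forall>g. \<exists>!l. l < m \<and> g - h l \<in> N"
    and e_def: "\<forall>i j. e i j = (\<lambda>g. if g \<in> D then \<chi> i g * \<eta> j g / complex_of_real (sqrt (real k)) else 0)"
    and et_def: "\<forall>i j. et i j = (\<lambda>g. \<Sum>a<m. e i a g * cnj (\<eta> a (h j)) / complex_of_real (sqrt (real m)))"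
  shows "(\<forall>i<n. cspan_fam m (e i) = cspan_fam m (et i))
         \<and> almost_flat D {et i j | i j. i < n \<and> j < m}
         \<and> (\<forall>i<n. \<forall>j<m. real (card {g\<in>D. et i j g \<noteq> 0}) = real k / real m)"
proof -
  from dds have card: "card (UNIV :: 'a set) = m * card N" and "k > 0"
    unfolding semiregular_dds_def divisible_difference_set_def by auto
  then have "m > 0" by (metis finite_UNIV_card_ge_0 finite mult_is_0 neq0_conv)
  note et_eq = transformed_vector_eq[OF eta card e_def et_def]
  have span: "cspan_fam m (e i) = cspan_fam m (et i)" for i
  proof
    show "cspan_fam m (et i) \<subseteq> cspan_fam m (e i)"
      using et_def by (intro cspan_fam_subset_lincomb[where M = "\<lambda>j a. cnj (\<eta> a (h j)) / complex_of_real (sqrt (real m))"])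
        (simp add: mult.commute)
    show "cspan_fam m (e i) \<subseteq> cspan_fam m (et i)"
      using vector_eq_inverse_transform[OF eta card h_reps e_def et_def]
      by (intro cspan_fam_subset_lincomb[where M = "\<lambda>a j. \<eta> a (h j) / complex_of_real (sqrt (real m))"]) blast
  qed
  have support: "{g\<in>D. et i j g \<noteq> 0} = {g\<in>D. g - h j \<in> N}" if "i < n" for i j
    using character_nonzero chi_char that \<open>k > 0\<close> \<open>m > 0\<close> by (auto simp: et_eq)
  have "almost_flat D {et i j | i j. i < n \<and> j < m}"
    unfolding almost_flat_def using chi_char
    by (intro exI[of _ "sqrt (real m / real k)"]) (auto simp: et_eq norm_mult is_character_def)
  then show ?thesis using span support semiregular_dds_card_coset[OF dds h_reps] by auto
qed

end
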